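(* Let $R$ be a reduced ring and let $S=\left\{\begin{pmatrix} a&b\\0&a\end{pmatrix} : a,b\in R\right\}$. Then $S$ is almost Armendariz, and the trivial extension $T(S,S)$ is also almost Armendariz.
   Context: All rings are associative with identity. A ring is reduced if it has no nonzero nilpotent elements. For a ring $R$ and an $R$-bimodule $M$, the trivial extension $T(R,M)$ is $R\times M$ with componentwise addition and multiplication $(r_1,m_1)(r_2,m_2)=(r_1r_2, r_1m_2+m_1r_2)$. For a ring $R$, $P(R)$ denotes the prime radical of $R$ (the intersection of all prime ideals of $R$, equivalently the set of strongly nilpotent elements of $R$). A ring $R$ is called almost Armendariz if whenever $f(x)=\sum_{i=0}^m a_ix^i$ and $g(x)=\sum_{j=0}^n b_jx^j\in R[x]$ satisfy $f(x)g(x)=0$, then $a_ib_j\in P(R)$ for all $0\le i\le m$, $0\le j\le n$. *)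

theory Defs
  imports "HOL-Algebra.UnivPoly"
begin

definition reduced_ring :: "('a, 'm) ring_scheme \<Rightarrow> bool" where
  "reduced_ring R \<longleftrightarrow>
     (\<forall>a\<in>carrier R. \<forall>n::nat. a [^]\<^bsub>R\<^esub> n = \<zero>\<^bsub>R\<^esub> \<longrightarrow> a = \<zero>\<^bsub>R\<^esub>)"

definition prime_ideal_nc :: "'a set \<Rightarrow> ('a, 'm) ring_scheme \<Rightarrow> bool" where
  "prime_ideal_nc P R \<longleftrightarrow> ideal P R \<and> P \<noteq> carrier R \<and>
     (\<forall>a\<in>carrier R. \<forall>b\<in>carrier R.
        (\<forall>r\<in>carrier R. a \<otimes>\<^bsub>R\<^esub> r \<otimes>\<^bsub>R\<^esub> b \<in> P) \<longrightarrow> a \<in> P \<or> b \<in> P)"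

(* prime radical: intersection of all prime ideals (= carrier if there are none) *)
definition prime_radical :: "('a, 'm) ring_scheme \<Rightarrow> 'a set" where
  "prime_radical R = carrier R \<inter> \<Inter>{P. prime_ideal_nc P R}"

definition almost_armendariz :: "('a, 'm) ring_scheme \<Rightarrow> bool" where
  "almost_armendariz R \<longleftrightarrow>
     (\<forall>f\<in>carrier (UP R). \<forall>g\<in>carrier (UP R).
        f \<otimes>\<^bsub>UP R\<^esub> g = \<zero>\<^bsub>UP R\<^esub> \<longrightarrow>
        (\<forall>i j. coeff (UP R) f i \<otimes>\<^bsub>R\<^esub> coeff (UP R) g j \<in> prime_radical R))"

(* 2x2 matrices over R, written row-wise as ((a,b),(c,d)) for [[a,b],[c,d]] *)
type_synonym 'a mat2 = "('a \<times> 'a) \<times> ('a \<times> 'a)"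

definition mat2_ring :: "('a, 'm) ring_scheme \<Rightarrow> 'a mat2 ring" where
  "mat2_ring R = \<lparr>
     carrier = {((a,b),(c,d)) | a b c d.
                  a \<in> carrier R \<and> b \<in> carrier R \<and> c \<in> carrier R \<and> d \<in> carrier R},
     mult = (\<lambda>((a,b),(c,d)) ((e,f),(g,h)).
               ((a \<otimes>\<^bsub>R\<^esub> e \<oplus>\<^bsub>R\<^esub> b \<otimes>\<^bsub>R\<^esub> g, a \<otimes>\<^bsub>R\<^esub> f \<oplus>\<^bsub>R\<^esub> b \<otimes>\<^bsub>R\<^esub> h),
                (c \<otimes>\<^bsub>R\<^esub> e \<oplus>\<^bsub>R\<^esub> d \<otimes>\<^bsub>R\<^esub> g, c \<otimes>\<^bsub>R\<^esub> f \<oplus>\<^bsub>R\<^esub> d \<otimes>\<^bsub>R\<^esub> h))),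
     one = ((\<one>\<^bsub>R\<^esub>, \<zero>\<^bsub>R\<^esub>), (\<zero>\<^bsub>R\<^esub>, \<one>\<^bsub>R\<^esub>)),
     zero = ((\<zero>\<^bsub>R\<^esub>, \<zero>\<^bsub>R\<^esub>), (\<zero>\<^bsub>R\<^esub>, \<zero>\<^bsub>R\<^esub>)),
     add = (\<lambda>((a,b),(c,d)) ((e,f),(g,h)).
               ((a \<oplus>\<^bsub>R\<^esub> e, b \<oplus>\<^bsub>R\<^esub> f), (c \<oplus>\<^bsub>R\<^esub> g, d \<oplus>\<^bsub>R\<^esub> h))) \<rparr>"

definition upper_S :: "('a, 'm) ring_scheme \<Rightarrow> 'a mat2 ring" where
  "upper_S R = (mat2_ring R) \<lparr> carrier :=
     {((a,b),(\<zero>\<^bsub>R\<^esub>,a)) | a b. a \<in> carrier R \<and> b \<in> carrier R} \<rparr>"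

(* trivial extension T(R,M) for M = R viewed as an R-bimodule over itself *)
definition triv_ext_self :: "('a, 'm) ring_scheme \<Rightarrow> ('a \<times> 'a) ring" where
  "triv_ext_self R = \<lparr>
     carrier = carrier R \<times> carrier R,
     mult = (\<lambda>(r1,m1) (r2,m2). (r1 \<otimes>\<^bsub>R\<^esub> r2, r1 \<otimes>\<^bsub>R\<^esub> m2 \<oplus>\<^bsub>R\<^esub> m1 \<otimes>\<^bsub>R\<^esub> r2)),
     one = (\<one>\<^bsub>R\<^esub>, \<zero>\<^bsub>R\<^esub>),
     zero = (\<zero>\<^bsub>R\<^esub>, \<zero>\<^bsub>R\<^esub>),
     add = (\<lambda>(r1,m1) (r2,m2). (r1 \<oplus>\<^bsub>R\<^esub> r2, m1 \<oplus>\<^bsub>R\<^esub> m2)) \<rparr>"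

end

theory Submission
  imports Defs
begin

text \<open>
  Reading off the diagonal entry is a ring homomorphism from \<open>S\<close>, and from \<open>T(S,S)\<close>, onto
  the reduced ring \<open>R\<close>, and in both rings every element \<open>k\<close> of the kernel satisfies
  \<open>k r k r' k = 0\<close>, so \<open>k\<close> lies in every prime ideal. If \<open>f g = 0\<close>, then the images of \<open>f\<close> and
  \<open>g\<close> multiply to zero over \<open>R\<close>; reduced rings are Armendariz, so every product of a
  coefficient of \<open>f\<close> with one of \<open>g\<close> lies in the kernel, hence in the prime radical.
\<close>

lemma (in ring) reduced_square_eq_zero:
  assumes "reduced_ring R" "a \<in> carrier R" "a \<otimes> a = \<zero>"
  shows "a = \<zero>"
proof -
  have "a [^] (2::nat) = \<zero>" using assms by (simp add: numeral_2_eq_2)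
  then show ?thesis using assms unfolding reduced_ring_def by blast
qed

lemma (in ring) reduced_mult_eq_zero_commute:
  assumes red: "reduced_ring R" and ab: "a \<in> carrier R" "b \<in> carrier R" "a \<otimes> b = \<zero>"
  shows "b \<otimes> a = \<zero>"
proof -
  have "(b \<otimes> a) \<otimes> (b \<otimes> a) = b \<otimes> (a \<otimes> b) \<otimes> a" using ab(1,2) by (simp add: m_assoc)
  also have "\<dots> = \<zero>" unfolding ab(3) using ab by simp
  finally show ?thesis using reduced_square_eq_zero[OF red] ab by blast
qed

text \<open>
  Multiplying the degree-\<open>k\<close> convolution on the right by \<open>A p\<close> kills every summand except
  \<open>A p B (k - p) A p\<close>: those with \<open>i < p\<close> by induction on \<open>p\<close>, those with \<open>i > p\<close> because
  \<open>B (k - i) A p = 0\<close> is a product of lower total degree with its factors swapped.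
\<close>

lemma (in ring) reduced_convolution_degree_step:
  fixes A B :: "nat \<Rightarrow> 'a"
  assumes red: "reduced_ring R"
    and A: "\<And>i. A i \<in> carrier R" and B: "\<And>j. B j \<in> carrier R"
    and conv: "(\<Oplus>i\<in>{..k}. A i \<otimes> B (k - i)) = \<zero>"
    and lower: "\<And>i j. i + j < k \<Longrightarrow> A i \<otimes> B j = \<zero>"
    and "p \<le> k"
  shows "A p \<otimes> B (k - p) = \<zero>"
  using \<open>p \<le> k\<close>
proof (induction p rule: less_induct)
  case (less p)
  have summand: "A i \<otimes> B (k - i) \<otimes> A p = (if p = i then A i \<otimes> B (k - i) \<otimes> A i else \<zero>)"
    if "i \<in> {..k}" for i
  proof (cases "i < p")
    case True
    then show ?thesis using less A B by auto
  next
    case False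
    show ?thesis
    proof (cases "i = p")
      case False
      with \<open>\<not> i < p\<close> \<open>i \<in> {..k}\<close> less.prems have "p + (k - i) < k" by auto
      then have "B (k - i) \<otimes> A p = \<zero>"
        using reduced_mult_eq_zero_commute[OF red A B lower] by blast
      then show ?thesis using False A B by (simp add: m_assoc)
    qed simp
  qed
  have "\<zero> = (\<Oplus>i\<in>{..k}. A i \<otimes> B (k - i)) \<otimes> A p" using conv A by simp
  also have "\<dots> = (\<Oplus>i\<in>{..k}. A i \<otimes> B (k - i) \<otimes> A p)"
    using finsum_ldistr[of "{..k}" "A p" "\<lambda>i. A i \<otimes> B (k - i)"] A B by (simp add: Pi_def)
  also have "\<dots> = (\<Oplus>i\<in>{..k}. if p = i then A i \<otimes> B (k - i) \<otimes> A i else \<zero>)"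
    using summand A B by (intro add.finprod_cong') auto
  also have "\<dots> = A p \<otimes> B (k - p) \<otimes> A p"
    using finsum_singleton[of p "{..k}" "\<lambda>i. A i \<otimes> B (k - i) \<otimes> A i"] less.prems A B by auto
  finally have "A p \<otimes> B (k - p) \<otimes> A p = \<zero>" ..
  then have "(A p \<otimes> B (k - p)) \<otimes> (A p \<otimes> B (k - p)) = \<zero>"
    using A B m_assoc[of "A p \<otimes> B (k - p)" "A p" "B (k - p)"] by simp
  then show ?case using reduced_square_eq_zero[OF red] A B by blast
qed

lemma (in ring) reduced_convolution_eq_zero_imp_mult_eq_zero:
  fixes A B :: "nat \<Rightarrow> 'a"
  assumes red: "reduced_ring R"
    and A: "\<And>i. A i \<in> carrier R" and B: "\<And>j. B j \<in> carrier R"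
    and conv: "\<And>k. (\<Oplus>i\<in>{..k}. A i \<otimes> B (k - i)) = \<zero>"
  shows "A i \<otimes> B j = \<zero>"
proof -
  have "\<forall>i j. i + j = k \<longrightarrow> A i \<otimes> B j = \<zero>" for k
  proof (induction k rule: less_induct)
    case (less k)
    have "A p \<otimes> B (k - p) = \<zero>" if "p \<le> k" for p
      using reduced_convolution_degree_step[OF red A B conv _ that] less by blast
    then show ?case by (metis le_add1 add_diff_cancel_left')
  qed
  then show ?thesis by blast
qed

lemma (in ring) mem_prime_radicalI:
  assumes x: "x \<in> carrier R"
    and sandwich: "\<And>r r'. r \<in> carrier R \<Longrightarrow> r' \<in> carrier R \<Longrightarrow> x \<otimes> r \<otimes> x \<otimes> r' \<otimes> x = \<zero>"
  shows "x \<in> prime_radical R"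
proof -
  have "x \<in> P" if P: "prime_ideal_nc P R" for P
  proof -
    interpret P: ideal P R using P unfolding prime_ideal_nc_def by blast
    have prime: "\<And>a b. a \<in> carrier R \<Longrightarrow> b \<in> carrier R \<Longrightarrow>
        (\<forall>r\<in>carrier R. a \<otimes> r \<otimes> b \<in> P) \<Longrightarrow> a \<in> P \<or> b \<in> P"
      using P unfolding prime_ideal_nc_def by blast
    have "x \<otimes> r \<otimes> x \<in> P" if r: "r \<in> carrier R" for r
    proof -
      have "x \<otimes> r \<otimes> x \<in> P \<or> x \<in> P"
        using prime[of "x \<otimes> r \<otimes> x" x] sandwich[OF r] x r P.zero_closed by simp
      then show ?thesis using P.I_r_closed P.I_l_closed x r by auto
    qed
    then show ?thesis using prime[OF x x] by blast
  qed
  then show ?thesis using x unfolding prime_radical_def by blast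
qed

lemma almost_armendariz_via_hom_to_reduced:
  fixes S :: "('b, 'n) ring_scheme" and R :: "('a, 'm) ring_scheme"
  assumes S: "ring S" and R: "ring R" and red: "reduced_ring R"
    and h: "h \<in> ring_hom S R"
    and kernel: "\<And>k r r'. k \<in> carrier S \<Longrightarrow> h k = \<zero>\<^bsub>R\<^esub> \<Longrightarrow> r \<in> carrier S \<Longrightarrow> r' \<in> carrier S \<Longrightarrow>
       k \<otimes>\<^bsub>S\<^esub> r \<otimes>\<^bsub>S\<^esub> k \<otimes>\<^bsub>S\<^esub> r' \<otimes>\<^bsub>S\<^esub> k = \<zero>\<^bsub>S\<^esub>"
  shows "almost_armendariz S"
  unfolding almost_armendariz_def
proof (intro ballI impI allI)
  interpret h: ring_hom_ring S R h using ring_hom_ringI2[OF S R h] .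
  interpret UP_S: UP_ring S "UP S" by (unfold_locales; simp)
  fix f g i j
  assume f: "f \<in> carrier (UP S)" and g: "g \<in> carrier (UP S)"
    and fg: "f \<otimes>\<^bsub>UP S\<^esub> g = \<zero>\<^bsub>UP S\<^esub>"
  let ?F = "coeff (UP S) f" and ?G = "coeff (UP S) g"
  have conv: "(\<Oplus>\<^bsub>R\<^esub>i\<in>{..k}. h (?F i) \<otimes>\<^bsub>R\<^esub> h (?G (k - i))) = \<zero>\<^bsub>R\<^esub>" for k
  proof -
    have "(\<Oplus>\<^bsub>S\<^esub>i\<in>{..k}. ?F i \<otimes>\<^bsub>S\<^esub> ?G (k - i)) = \<zero>\<^bsub>S\<^esub>"
      using UP_S.coeff_mult[OF f g, of k] fg by simp
    then have "h (\<Oplus>\<^bsub>S\<^esub>i\<in>{..k}. ?F i \<otimes>\<^bsub>S\<^esub> ?G (k - i)) = \<zero>\<^bsub>R\<^esub>" by simp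
    then show ?thesis using f g by (simp add: Pi_def comp_def)
  qed
  have "h (?F i) \<otimes>\<^bsub>R\<^esub> h (?G j) = \<zero>\<^bsub>R\<^esub>"
    using ring.reduced_convolution_eq_zero_imp_mult_eq_zero[OF R red, of "\<lambda>i. h (?F i)" "\<lambda>j. h (?G j)"]
      conv f g by simp
  then have "h (?F i \<otimes>\<^bsub>S\<^esub> ?G j) = \<zero>\<^bsub>R\<^esub>" using f g by simp
  then show "?F i \<otimes>\<^bsub>S\<^esub> ?G j \<in> prime_radical S"
    using ring.mem_prime_radicalI[OF S] kernel f g by simp
qed

lemma upper_S_simps:
  "carrier (upper_S R) = {((a, b), (\<zero>\<^bsub>R\<^esub>, a)) | a b. a \<in> carrier R \<and> b \<in> carrier R}"
  "((a, b), (c, d)) \<otimes>\<^bsub>upper_S R\<^esub> ((e, f), (g, h)) =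
     ((a \<otimes>\<^bsub>R\<^esub> e \<oplus>\<^bsub>R\<^esub> b \<otimes>\<^bsub>R\<^esub> g, a \<otimes>\<^bsub>R\<^esub> f \<oplus>\<^bsub>R\<^esub> b \<otimes>\<^bsub>R\<^esub> h),
      (c \<otimes>\<^bsub>R\<^esub> e \<oplus>\<^bsub>R\<^esub> d \<otimes>\<^bsub>R\<^esub> g, c \<otimes>\<^bsub>R\<^esub> f \<oplus>\<^bsub>R\<^esub> d \<otimes>\<^bsub>R\<^esub> h))"
  "((a, b), (c, d)) \<oplus>\<^bsub>upper_S R\<^esub> ((e, f), (g, h)) =
     ((a \<oplus>\<^bsub>R\<^esub> e, b \<oplus>\<^bsub>R\<^esub> f), (c \<oplus>\<^bsub>R\<^esub> g, d \<oplus>\<^bsub>R\<^esub> h))"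
  "\<one>\<^bsub>upper_S R\<^esub> = ((\<one>\<^bsub>R\<^esub>, \<zero>\<^bsub>R\<^esub>), (\<zero>\<^bsub>R\<^esub>, \<one>\<^bsub>R\<^esub>))"
  "\<zero>\<^bsub>upper_S R\<^esub> = ((\<zero>\<^bsub>R\<^esub>, \<zero>\<^bsub>R\<^esub>), (\<zero>\<^bsub>R\<^esub>, \<zero>\<^bsub>R\<^esub>))"
  by (simp_all add: upper_S_def mat2_ring_def)

lemma triv_ext_self_simps:
  "carrier (triv_ext_self R) = carrier R \<times> carrier R"
  "(r1, m1) \<otimes>\<^bsub>triv_ext_self R\<^esub> (r2, m2) = (r1 \<otimes>\<^bsub>R\<^esub> r2, r1 \<otimes>\<^bsub>R\<^esub> m2 \<oplus>\<^bsub>R\<^esub> m1 \<otimes>\<^bsub>R\<^esub> r2)"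
  "(r1, m1) \<oplus>\<^bsub>triv_ext_self R\<^esub> (r2, m2) = (r1 \<oplus>\<^bsub>R\<^esub> r2, m1 \<oplus>\<^bsub>R\<^esub> m2)"
  "\<one>\<^bsub>triv_ext_self R\<^esub> = (\<one>\<^bsub>R\<^esub>, \<zero>\<^bsub>R\<^esub>)"
  "\<zero>\<^bsub>triv_ext_self R\<^esub> = (\<zero>\<^bsub>R\<^esub>, \<zero>\<^bsub>R\<^esub>)"
  by (simp_all add: triv_ext_self_def)

lemma (in ring) ring_upper_S: "ring (upper_S R)"
proof (rule ringI)
  show "abelian_group (upper_S R)"
  proof (rule abelian_groupI)
    fix x assume "x \<in> carrier (upper_S R)"
    then obtain a b where x: "x = ((a, b), (\<zero>, a))" "a \<in> carrier R" "b \<in> carrier R"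
      by (auto simp: upper_S_simps)
    show "\<exists>y\<in>carrier (upper_S R). y \<oplus>\<^bsub>upper_S R\<^esub> x = \<zero>\<^bsub>upper_S R\<^esub>"
      by (rule bexI[of _ "((\<ominus> a, \<ominus> b), (\<zero>, \<ominus> a))"]) (auto simp: x upper_S_simps l_neg)
  qed (auto simp: upper_S_simps a_ac)
qed (auto simp: upper_S_simps m_assoc l_distr r_distr a_ac intro!: monoidI)

lemma (in ring) ring_triv_ext_self: "ring (triv_ext_self R)"
proof (rule ringI)
  show "abelian_group (triv_ext_self R)"
  proof (rule abelian_groupI)
    fix x assume "x \<in> carrier (triv_ext_self R)"
    then obtain a b where x: "x = (a, b)" "a \<in> carrier R" "b \<in> carrier R"
      by (auto simp: triv_ext_self_simps)
    show "\<exists>y\<in>carrier (triv_ext_self R). y \<oplus>\<^bsub>triv_ext_self R\<^esub> x = \<zero>\<^bsub>triv_ext_self R\<^esub>"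
      by (rule bexI[of _ "(\<ominus> a, \<ominus> b)"]) (auto simp: x triv_ext_self_simps l_neg)
  qed (auto simp: triv_ext_self_simps a_ac)
qed (auto simp: triv_ext_self_simps m_assoc l_distr r_distr a_ac intro!: monoidI)

lemma (in ring) upper_S_diagonal_hom: "(\<lambda>x. fst (fst x)) \<in> ring_hom (upper_S R) R"
  by (rule ring_hom_memI) (auto simp: upper_S_simps)

lemma (in ring) triv_ext_upper_S_diagonal_hom:
  "(\<lambda>x. fst (fst (fst x))) \<in> ring_hom (triv_ext_self (upper_S R)) R"
  by (rule ring_hom_memI) (auto simp: upper_S_simps triv_ext_self_simps)

lemma (in ring) upper_S_diagonal_kernel:
  assumes "k \<in> carrier (upper_S R)" "fst (fst k) = \<zero>"
    and "r \<in> carrier (upper_S R)" "r' \<in> carrier (upper_S R)"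
  shows "k \<otimes>\<^bsub>upper_S R\<^esub> r \<otimes>\<^bsub>upper_S R\<^esub> k \<otimes>\<^bsub>upper_S R\<^esub> r' \<otimes>\<^bsub>upper_S R\<^esub> k = \<zero>\<^bsub>upper_S R\<^esub>"
  using assms by (auto simp: upper_S_simps)

lemma (in ring) triv_ext_upper_S_diagonal_kernel:
  defines "T \<equiv> triv_ext_self (upper_S R)"
  assumes "k \<in> carrier T" "fst (fst (fst k)) = \<zero>" and "r \<in> carrier T" "r' \<in> carrier T"
  shows "k \<otimes>\<^bsub>T\<^esub> r \<otimes>\<^bsub>T\<^esub> k \<otimes>\<^bsub>T\<^esub> r' \<otimes>\<^bsub>T\<^esub> k = \<zero>\<^bsub>T\<^esub>"
  using assms by (auto simp: upper_S_simps triv_ext_self_simps)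

theorem corollary2p3:
  fixes R :: "('a, 'm) ring_scheme"
  assumes "ring R" and "reduced_ring R"
  shows "almost_armendariz (upper_S R) \<and> almost_armendariz (triv_ext_self (upper_S R))"
proof
  interpret ring R by fact
  show "almost_armendariz (upper_S R)"
    using almost_armendariz_via_hom_to_reduced[OF ring_upper_S assms upper_S_diagonal_hom]
      upper_S_diagonal_kernel by blast
  show "almost_armendariz (triv_ext_self (upper_S R))"
    using almost_armendariz_via_hom_to_reduced[OF ring.ring_triv_ext_self[OF ring_upper_S] assms
        triv_ext_upper_S_diagonal_hom]
      triv_ext_upper_S_diagonal_kernel by blast
qed

end
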